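(* Let $G$ be a connected finite simple graph with $n\ge2$ vertices. Then $$\bigcup_{H}\mathscr{H}_H(G)=\{0,1,\dots,h^+_{K_n}(G)\},$$ where $H$ ranges over all simple graphs on a fixed $n$-element vertex set, and $h^+_{K_n}(G)=\max\mathscr{H}_{K_n}(G)$ (the sum of distances over all pairs of vertices of $G$).
   Context: For finite simple graphs $H,G$ with $|V(H)|=|V(G)|$ and $G$ connected, the $H$-Hamiltonian spectrum of $G$ is $\mathscr{H}_H(G)=\{\sum_{\{x,y\}\in E(H)}\rho_G(f(x),f(y)) : f:V(H)\to V(G)\text{ bijection}\}$, where $\rho_G$ is the graph distance in $G$; $h^+_H(G)=\max\mathscr H_H(G)$. *)

theory Defs
  imports Main
begin

definition simple_graph :: "'a set \<Rightarrow> ('a \<Rightarrow> 'a \<Rightarrow> bool) \<Rightarrow> bool" where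
  "simple_graph V E \<longleftrightarrow> finite V \<and> (\<forall>x y. E x y \<longrightarrow> x \<in> V \<and> y \<in> V)
     \<and> (\<forall>x y. E x y \<longrightarrow> E y x) \<and> (\<forall>x. \<not> E x x)"

definition walk :: "('a \<Rightarrow> 'a \<Rightarrow> bool) \<Rightarrow> 'a \<Rightarrow> 'a \<Rightarrow> nat \<Rightarrow> bool" where
  "walk E x y k \<longleftrightarrow> (\<exists>p. length p = Suc k \<and> p ! 0 = x \<and> p ! k = y
       \<and> (\<forall>i<k. E (p ! i) (p ! Suc i)))"

definition connected_graph :: "'a set \<Rightarrow> ('a \<Rightarrow> 'a \<Rightarrow> bool) \<Rightarrow> bool" where
  "connected_graph V E \<longleftrightarrow> V \<noteq> {} \<and> (\<forall>x\<in>V. \<forall>y\<in>V. \<exists>k. walk E x y k)"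

definition dist :: "('a \<Rightarrow> 'a \<Rightarrow> bool) \<Rightarrow> 'a \<Rightarrow> 'a \<Rightarrow> nat" where
  "dist E x y = (LEAST k. walk E x y k)"

definition simple_graphs_on :: "'b set \<Rightarrow> 'b set set set" where
  "simple_graphs_on W = Pow {e. e \<subseteq> W \<and> card e = 2}"

definition ham_spectrum :: "'b set \<Rightarrow> 'b set set \<Rightarrow> 'a set \<Rightarrow> ('a \<Rightarrow> 'a \<Rightarrow> bool) \<Rightarrow> nat set" where
  "ham_spectrum W EH V E =
     {s. \<exists>f. bij_betw f W V \<and> s = (\<Sum>e\<in>EH. dist E (f (SOME x. x \<in> e)) (f (SOME y. y \<in> e - {SOME x. x \<in> e})))}"

definition complete_edges :: "'b set \<Rightarrow> 'b set set" where
  "complete_edges W = {e. e \<subseteq> W \<and> card e = 2}"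

definition h_plus :: "'b set \<Rightarrow> 'b set set \<Rightarrow> 'a set \<Rightarrow> ('a \<Rightarrow> 'a \<Rightarrow> bool) \<Rightarrow> nat" where
  "h_plus W EH V E = Max (ham_spectrum W EH V E)"

end

theory Submission
  imports Defs
begin

text \<open>Every bijection \<open>f\<close> of \<open>W\<close> onto \<open>V\<close> maps the 2-subsets of \<open>W\<close> bijectively onto those
  of \<open>V\<close>, so the \<open>K\<^sub>n\<close>-spectrum is the single number \<open>D\<close>, the sum of all pairwise distances
  in \<open>G\<close>; every \<open>H\<close>-value is a subsum of it, hence lies in \<open>{0..D}\<close>.
  Conversely, if two vertices have distance \<open>d \<ge> 2\<close>, the second-to-last vertex of a geodesic
  between them is at distance \<open>d - 1\<close> from the first. So the multiset of pairwise distances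
  contains \<open>d - 1\<close> whenever it contains \<open>d \<ge> 2\<close>, and any such multiset of numbers has every
  value between \<open>0\<close> and its total as a subsum: a largest element \<open>m\<close> is at most one more
  than the total of the others (one of which is \<open>m - 1\<close>), so induction on the size applies.\<close>

lemma subset_sum_attains_all_below:
  fixes w :: "'c \<Rightarrow> nat"
  assumes "finite S" and "\<forall>x\<in>S. 2 \<le> w x \<longrightarrow> (\<exists>y\<in>S. w y = w x - 1)" and "k \<le> sum w S"
  shows "\<exists>A\<subseteq>S. sum w A = k"
  using assms
proof (induction S arbitrary: k rule: finite_ranking_induct[where f = w])
  case empty
  then show ?case by simp
next
  case (insert x S)
  show ?case
  proof (cases "x \<in> S")
    case True
    then show ?thesis using insert by (simp add: insert_absorb)
  next
    case x_new: False
    have gap: "\<forall>z\<in>S. 2 \<le> w z \<longrightarrow> (\<exists>y\<in>S. w y = w z - 1)"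
    proof (intro ballI impI)
      fix z assume "z \<in> S" "2 \<le> w z"
      moreover obtain y where "y \<in> insert x S" "w y = w z - 1"
        using insert.prems(1) \<open>z \<in> S\<close> \<open>2 \<le> w z\<close> by blast
      ultimately show "\<exists>y\<in>S. w y = w z - 1" using insert.hyps(2)[of z] by force
    qed
    have wx: "w x \<le> Suc (sum w S)"
    proof (cases "2 \<le> w x")
      case True
      then obtain y where "y \<in> S" "w y = w x - 1" using insert.prems(1) by force
      then show ?thesis using member_le_sum[of y S w] insert.hyps(1) by simp
    qed auto
    show ?thesis
    proof (cases "k \<le> sum w S")
      case True
      then show ?thesis using insert.IH[OF gap] by blast
    next
      case False
      then have "k - w x \<le> sum w S" using insert.prems(2) insert.hyps(1) x_new by simp
      then obtain A where A: "A \<subseteq> S" "sum w A = k - w x" using insert.IH[OF gap] by blast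
      have "x \<notin> A" "finite A" using A x_new insert.hyps(1) finite_subset by auto
      then have "sum w (insert x A) = w x + (k - w x)" using A by simp
      also have "\<dots> = k" using False wx by simp
      finally show ?thesis using A by blast
    qed
  qed
qed

lemma walk_rev:
  assumes "\<forall>x y. E x y \<longrightarrow> E y x" and "walk E x y k"
  shows "walk E y x k"
proof -
  obtain p where p: "length p = Suc k" "p ! 0 = x" "p ! k = y" "\<forall>i<k. E (p ! i) (p ! Suc i)"
    using assms(2) unfolding walk_def by auto
  have "E (rev p ! i) (rev p ! Suc i)" if "i < k" for i
  proof -
    have "E (p ! (k - Suc i)) (p ! Suc (k - Suc i))" using p(4) that by simp
    then show ?thesis using assms(1) p(1) that by (simp add: rev_nth Suc_diff_Suc)
  qed
  then show ?thesis unfolding walk_def using p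
    by (intro exI[of _ "rev p"]) (simp add: rev_nth)
qed

lemma dist_commute:
  assumes "simple_graph V E"
  shows "dist E x y = dist E y x"
proof -
  have "\<forall>x y. E x y \<longrightarrow> E y x" using assms unfolding simple_graph_def by blast
  then have "walk E x y = walk E y x" using walk_rev by (intro ext iffI)
  then show ?thesis unfolding dist_def by simp
qed

lemma walk_prefix:
  assumes "length p = Suc k" "p ! 0 = x" "\<forall>i<k. E (p ! i) (p ! Suc i)" "j \<le> k"
  shows "walk E x (p ! j) j"
  unfolding walk_def using assms by (intro exI[of _ "take (Suc j) p"]) auto

lemma walk_snoc:
  assumes "walk E x y k" and "E y z"
  shows "walk E x z (Suc k)"
proof -
  obtain p where p: "length p = Suc k" "p ! 0 = x" "p ! k = y" "\<forall>i<k. E (p ! i) (p ! Suc i)"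
    using assms(1) unfolding walk_def by auto
  have "E ((p @ [z]) ! i) ((p @ [z]) ! Suc i)" if "i < Suc k" for i
    using p assms(2) that by (cases "i = k") (auto simp: nth_append)
  then show ?thesis unfolding walk_def using p
    by (intro exI[of _ "p @ [z]"]) (auto simp: nth_append)
qed

lemma dist_self: "dist E x x = 0"
proof -
  have "walk E x x 0" unfolding walk_def by (intro exI[of _ "[x]"]) simp
  then show ?thesis unfolding dist_def by (simp add: Least_le le_zero_eq)
qed

lemma dist_le_walk: "walk E x y k \<Longrightarrow> dist E x y \<le> k"
  unfolding dist_def by (rule Least_le)

lemma walk_dist: "walk E x y k \<Longrightarrow> walk E x y (dist E x y)"
  unfolding dist_def by (rule LeastI)

lemma dist_last_step:
  assumes "walk E u v k" and "dist E u v = Suc d"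
  obtains c where "E c v" and "dist E u c = d"
proof -
  obtain p where p: "length p = Suc (Suc d)" "p ! 0 = u" "p ! Suc d = v"
      "\<forall>i<Suc d. E (p ! i) (p ! Suc i)"
    using walk_dist[OF assms(1)] assms(2) unfolding walk_def by auto
  have "E (p ! d) v" using p(3,4) by auto
  moreover have "dist E u (p ! d) = d"
  proof (rule antisym)
    show "dist E u (p ! d) \<le> d" by (rule dist_le_walk[OF walk_prefix[OF p(1,2,4)]]) simp
    have "walk E u v (Suc (dist E u (p ! d)))"
      using walk_snoc[OF walk_dist[OF walk_prefix[OF p(1,2,4)]] \<open>E (p ! d) v\<close>] by simp
    then show "d \<le> dist E u (p ! d)" using dist_le_walk assms(2) by fastforce
  qed
  ultimately show ?thesis using that by blast
qed

definition pair_dist :: "('a \<Rightarrow> 'a \<Rightarrow> bool) \<Rightarrow> ('b \<Rightarrow> 'a) \<Rightarrow> 'b set \<Rightarrow> nat" where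
  "pair_dist E f e = dist E (f (SOME x. x \<in> e)) (f (SOME y. y \<in> e - {SOME x. x \<in> e}))"

lemma ham_spectrum_pair_dist:
  "ham_spectrum W EH V E = {sum (pair_dist E f) EH | f. bij_betw f W V}"
  unfolding ham_spectrum_def pair_dist_def by auto

lemma pair_dist_doubleton:
  assumes "\<And>x y. dist E x y = dist E y x" and "a \<noteq> b"
  shows "pair_dist E f {a, b} = dist E (f a) (f b)"
proof -
  define p where "p = (SOME x. x \<in> {a, b})"
  have p: "p \<in> {a, b}" unfolding p_def by (rule someI[of _ a]) simp
  define q where "q = (SOME y. y \<in> {a, b} - {p})"
  have "\<exists>y. y \<in> {a, b} - {p}" using assms(2) by blast
  then have q: "q \<in> {a, b} - {p}" unfolding q_def by (rule someI_ex)
  have "pair_dist E f {a, b} = dist E (f p) (f q)" unfolding pair_dist_def p_def q_def by simp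
  moreover have "p = a \<and> q = b \<or> p = b \<and> q = a" using p q by blast
  ultimately show ?thesis using assms(1)[of "f b" "f a"] by auto
qed

lemma complete_edges_doubleton: "e \<in> complete_edges W \<longleftrightarrow> (\<exists>a\<in>W. \<exists>b\<in>W. a \<noteq> b \<and> e = {a, b})"
  unfolding complete_edges_def by (auto simp: card_2_iff)

lemma finite_complete_edges: "finite W \<Longrightarrow> finite (complete_edges W)"
  unfolding complete_edges_def by (rule finite_subset[of _ "Pow W"]) auto

lemma bij_betw_image_complete_edges:
  assumes "bij_betw f W V"
  shows "bij_betw (image f) (complete_edges W) (complete_edges V)"
proof (rule bij_betw_subset[OF bij_betw_Pow[OF assms]])
  show "complete_edges W \<subseteq> Pow W" unfolding complete_edges_def by auto
  have inj: "inj_on f W" and im: "f ` W = V" using assms by (auto simp: bij_betw_def)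
  show "image f ` complete_edges W = complete_edges V"
  proof (intro equalityI subsetI)
    fix e assume "e \<in> image f ` complete_edges W"
    then obtain e0 where "e0 \<in> complete_edges W" "e = f ` e0" by blast
    then obtain a b where ab: "a \<in> W" "b \<in> W" "a \<noteq> b" "e = f ` {a, b}"
      unfolding complete_edges_doubleton by blast
    then have "f a \<in> V" "f b \<in> V" "f a \<noteq> f b"
      using im by (auto simp: inj_on_eq_iff[OF inj])
    then show "e \<in> complete_edges V" unfolding complete_edges_doubleton using ab(4) by auto
  next
    fix e assume "e \<in> complete_edges V"
    then obtain u v where uv: "u \<in> V" "v \<in> V" "u \<noteq> v" "e = {u, v}"
      unfolding complete_edges_doubleton by blast
    then obtain a b where ab: "a \<in> W" "b \<in> W" "u = f a" "v = f b" using im by blast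
    moreover from this have "a \<noteq> b" using uv(3) by auto
    ultimately have "{a, b} \<in> complete_edges W" unfolding complete_edges_doubleton by blast
    moreover have "e = f ` {a, b}" using uv(4) ab by simp
    ultimately show "e \<in> image f ` complete_edges W" by blast
  qed
qed

lemma sum_pair_dist_complete_edges:
  assumes "\<And>x y. dist E x y = dist E y x" and "bij_betw f W V"
  shows "sum (pair_dist E f) (complete_edges W) = sum (pair_dist E id) (complete_edges V)"
proof -
  have "pair_dist E f e = pair_dist E id (f ` e)" if e: "e \<in> complete_edges W" for e
  proof -
    obtain a b where ab: "a \<in> W" "b \<in> W" "a \<noteq> b" "e = {a, b}"
      using e unfolding complete_edges_doubleton by blast
    then have "f a \<noteq> f b" using assms(2) by (auto simp: bij_betw_def inj_on_eq_iff)
    then show ?thesis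
      using ab pair_dist_doubleton[OF assms(1), of a b f]
        pair_dist_doubleton[OF assms(1), of "f a" "f b" id] by simp
  qed
  then show ?thesis
    using sum.reindex_bij_betw[OF bij_betw_image_complete_edges[OF assms(2)]] by simp
qed

lemma ham_spectrum_complete_edges:
  assumes "\<And>x y. dist E x y = dist E y x" and "bij_betw f W V"
  shows "ham_spectrum W (complete_edges W) V E = {sum (pair_dist E id) (complete_edges V)}"
  using assms(2) sum_pair_dist_complete_edges[OF assms(1)] unfolding ham_spectrum_pair_dist
  by (auto intro!: exI[of _ f])

lemma pair_dist_predecessor:
  assumes "simple_graph V E" and "connected_graph V E" and "bij_betw f W V"
    and "e \<in> complete_edges W" and "2 \<le> pair_dist E f e"
  shows "\<exists>e'\<in>complete_edges W. pair_dist E f e' = pair_dist E f e - 1"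
proof -
  have sym: "\<And>x y. dist E x y = dist E y x" using dist_commute[OF assms(1)] .
  obtain a b where ab: "a \<in> W" "b \<in> W" "a \<noteq> b" "e = {a, b}"
    using assms(4) unfolding complete_edges_doubleton by blast
  then have "f a \<in> V" "f b \<in> V" using assms(3) by (auto dest: bij_betw_apply)
  then obtain k where walk: "walk E (f a) (f b) k"
    using assms(2) unfolding connected_graph_def by blast
  define d where "d = pair_dist E f e - 1"
  have d: "pair_dist E f e = Suc d" "1 \<le> d" using assms(5) unfolding d_def by arith+
  moreover have "pair_dist E f e = dist E (f a) (f b)"
    using pair_dist_doubleton[OF sym ab(3)] ab(4) by simp
  ultimately obtain c where c: "E c (f b)" "dist E (f a) c = d"
    using dist_last_step[OF walk] by auto
  have "c \<in> V" using c(1) assms(1) unfolding simple_graph_def by blast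
  define a' where "a' = inv_into W f c"
  have a': "a' \<in> W" "f a' = c"
    unfolding a'_def using \<open>c \<in> V\<close> assms(3)
    by (auto simp: bij_betw_def intro: inv_into_into f_inv_into_f)
  have "a \<noteq> a'" using a' c(2) d(2) dist_self[of E "f a"] by auto
  then have "{a, a'} \<in> complete_edges W"
    unfolding complete_edges_doubleton using ab(1) a'(1) by blast
  moreover have "pair_dist E f {a, a'} = d"
    using pair_dist_doubleton[OF sym \<open>a \<noteq> a'\<close>] a'(2) c(2) by simp
  ultimately show ?thesis using d(1) by auto
qed

theorem mainTheorem13:
  fixes V :: "'a set" and E :: "'a \<Rightarrow> 'a \<Rightarrow> bool" and W :: "'b set"
  assumes "simple_graph V E" and "connected_graph V E"
    and "card V = n" and "n \<ge> 2" and "finite W" and "card W = n"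
  shows "(\<Union>EH\<in>simple_graphs_on W. ham_spectrum W EH V E)
           = {0 .. h_plus W (complete_edges W) V E}"
proof -
  let ?K = "complete_edges W" and ?D = "sum (pair_dist E id) (complete_edges V)"
  have sym: "\<And>x y. dist E x y = dist E y x" using dist_commute[OF assms(1)] .
  have "finite V" using assms(1) unfolding simple_graph_def by blast
  then obtain f0 where f0: "bij_betw f0 W V"
    using finite_same_card_bij[OF assms(5)] assms(3,6) by metis
  have h_plus: "h_plus W ?K V E = ?D"
    unfolding h_plus_def ham_spectrum_complete_edges[OF sym f0] by simp
  have graphs: "simple_graphs_on W = Pow ?K" unfolding simple_graphs_on_def complete_edges_def ..
  have upper: "sum (pair_dist E f) EH \<le> ?D" if "EH \<subseteq> ?K" "bij_betw f W V" for EH f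
    using sum_mono2[OF finite_complete_edges[OF assms(5)] that(1), of "pair_dist E f"]
      sum_pair_dist_complete_edges[OF sym that(2)] by simp
  have attained: "\<exists>EH\<subseteq>?K. sum (pair_dist E f0) EH = k" if "k \<le> ?D" for k
  proof (rule subset_sum_attains_all_below[OF finite_complete_edges[OF assms(5)]])
    show "\<forall>e\<in>?K. 2 \<le> pair_dist E f0 e \<longrightarrow> (\<exists>e'\<in>?K. pair_dist E f0 e' = pair_dist E f0 e - 1)"
      using pair_dist_predecessor[OF assms(1,2) f0] by blast
    show "k \<le> sum (pair_dist E f0) ?K" using that sum_pair_dist_complete_edges[OF sym f0] by simp
  qed
  show ?thesis
  proof (intro equalityI subsetI)
    fix s assume "s \<in> (\<Union>EH\<in>simple_graphs_on W. ham_spectrum W EH V E)"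
    then show "s \<in> {0 .. h_plus W ?K V E}"
      unfolding graphs h_plus ham_spectrum_pair_dist using upper by auto
  next
    fix k assume "k \<in> {0 .. h_plus W ?K V E}"
    then obtain EH where "EH \<subseteq> ?K" "sum (pair_dist E f0) EH = k"
      using attained unfolding h_plus by auto
    then show "k \<in> (\<Union>EH\<in>simple_graphs_on W. ham_spectrum W EH V E)"
      unfolding graphs ham_spectrum_pair_dist using f0 by blast
  qed
qed

end
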